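(* Let $M$ be a score distribution model with non-negative weights ($w_M(j,k)\ge 0$ for all $j,k$). Let $s_1,s_2$ be road segments with $s_1.\mathit{lb} > s_2.\mathit{ub}$. Then $s_2$ does not contain an optimal subsegment (indeed, no network point of $s_2$ has maximal score $\mathit{score}_M$ over all network points).
   Context: A road network is a directed graph $G=(V,E)$ embedded in the plane: each vertex $v$ has a location $\mathit{loc}(v)\in\mathbb{R}^2$, and each edge $e=(v_i,v_j)$ has length $\|e\|$ equal to the Euclidean distance between its endpoints. A network point is a pair $p=(\mathit{eid},d)$ where $\mathit{eid}$ identifies an edge $e=(v_i,v_j)$ and $d\in[0,1]$ is the ratio of the distance from $v_i$ to the point to $\|e\|$; $P$ is the set of all network points. A road segment is a sequence $\langle p_1,\dots,p_n\rangle$, $n\ge 2$, with $p_1,p_n\in P$, $p_2,\dots,p_{n-1}\in V$, $p_1,p_2$ on the same edge, $p_{n-1},p_n$ on the same edge, and consecutive interior vertices joined by edges; a segment is identified with the set of network points it passes through, and $S$ is the set of segments. A facility $f$ is located at a network point $f.p$. A route usage object $\mathit{ro}=(\mathit{rid},r,\mathit{count},\langle \mathit{usage}_1,\dots,\mathit{usage}_{\mathit{count}}\rangle)$ has a route $r$ which is a road segment. A route $r$ covers a segment $s'$ if every point of $s'$ lies on $r$, and intersects $s'$ if some point of $s'$ lies on $r$; $s'.C$ (resp. $s'.I$) is the set of route usage objects whose routes cover (resp. intersect) $s'$. For a threshold $\delta>0$, a facility $f$ attracts $r$ if the shortest network distance from $f.p$ to $r$ is at most $\delta$. Each route has a score $\mathit{score}(r)\ge0$.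 A score distribution model $M$: the facilities attracting $r$ partition $r$ into $k$ consecutive subsegments and the $j$-th receives $w_M(j,k)\,\mathit{score}(r)$. The score $\mathit{score}_M(p)$ of a network point $p$ is the sum over all route usage objects whose route contains $p$ of the amount assigned by $M$ to the subsegment of that route containing $p$. For a segment $s$ and route $r_i$ intersecting $s$, $w_M(j_i,k_i)$ denotes the fraction of $\mathit{score}(r_i)$ that $M$ assigns to the $j_i$-th of the $k_i$ subsegments of $r_i$, the one in which $s$ lies. Then $s.\mathit{lb}=\sum_{r_i\in s.C} w_M(j_i,k_i)\mathit{score}(r_i)$ and $s.\mathit{ub}=\sum_{r_i\in s.I} w_M(j_i,k_i)\mathit{score}(r_i)$ (if $s$ meets several subsegments of a route because facilities lie on $s$, the lower bound takes the smallest and the upper bound the largest of these values). An optimal segment is a segment $s_{\mathit{opt}}$ such that (1) all points of $s_{\mathit{opt}}$ have the same $\mathit{score}_M$; (2) for all $p\in s_{\mathit{opt}}$ and $p'\in P$, $\mathit{score}_M(p')\le\mathit{score}_M(p)$; (3) there is no segment $s'\in S$ with $s_{\mathit{opt}}\subset s'$ satisfying (1) and (2). An optimal subsegment is a subsegment of an optimal segment. *)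

theory Defs
  imports Complex_Main
begin

text \<open>Road network: directed graph with edge set E (edges of type 'e), endpoints
  src e and tgt e (vertices of type 'v).  The planar embedding only determines edge
  lengths, which do not enter the statement.\<close>

type_synonym 'e npoint = "'e \<times> real"

definition netpoints :: "'e set \<Rightarrow> 'e npoint set" where
  "netpoints E = {(e, d). e \<in> E \<and> 0 \<le> d \<and> d \<le> 1}"

text \<open>Canonical location of a network point: a point at ratio 0 or 1 of an edge is the
  corresponding vertex (so vertices shared by several edges are identified).\<close>
datatype ('v, 'e) nloc = AtV 'v | OnE 'e real

definition canon :: "('e \<Rightarrow> 'v) \<Rightarrow> ('e \<Rightarrow> 'v) \<Rightarrow> 'e npoint \<Rightarrow> ('v, 'e) nloc" where
  "canon src tgt p = (if snd p = 0 then AtV (src (fst p))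
                      else if snd p = 1 then AtV (tgt (fst p)) else OnE (fst p) (snd p))"

text \<open>A road segment \<open><p1, v2, ..., v(n-1), pn>\<close> is represented by the list of edges it
  traverses (in order, consecutive edges sharing the interior vertices), the ratio ds of
  p1 on the first edge and the ratio de of pn on the last edge.  n = length es + 1 \<ge> 2.\<close>
type_synonym 'e segment = "real \<times> 'e list \<times> real"

definition is_segment :: "'e set \<Rightarrow> ('e \<Rightarrow> 'v) \<Rightarrow> ('e \<Rightarrow> 'v) \<Rightarrow> 'e segment \<Rightarrow> bool" where
  "is_segment E src tgt s = (case s of (ds, es, de) \<Rightarrow>
      es \<noteq> [] \<and> set es \<subseteq> E \<and> 0 \<le> ds \<and> ds \<le> 1 \<and> 0 \<le> de \<and> de \<le> 1 \<and>
      (\<forall>i. Suc i < length es \<longrightarrow> tgt (es ! i) = src (es ! Suc i)) \<and>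
      (length es = 1 \<longrightarrow> ds \<le> de))"

definition segset :: "('e \<Rightarrow> 'v) \<Rightarrow> ('e \<Rightarrow> 'v) \<Rightarrow> 'e segment \<Rightarrow> ('v, 'e) nloc set" where
  "segset src tgt s = canon src tgt ` (case s of (ds, es, de) \<Rightarrow>
      (if length es = 1 then {(hd es, d) | d. ds \<le> d \<and> d \<le> de}
       else {(hd es, d) | d. ds \<le> d \<and> d \<le> 1}
          \<union> {(e, d) | e d. e \<in> set (butlast (tl es)) \<and> 0 \<le> d \<and> d \<le> 1}
          \<union> {(last es, d) | d. 0 \<le> d \<and> d \<le> de}))"

text \<open>Score distribution: R is the finite set of route usage objects, rs ro the point set
  of the route of ro, sc ro = score(route ro), kk ro = number k of subsegments of the
  route, idx ro x = index j of the subsegment of the route containing x, w = w_M.\<close>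

definition scoreM :: "'r set \<Rightarrow> ('r \<Rightarrow> 'l set) \<Rightarrow> ('r \<Rightarrow> real) \<Rightarrow> (nat \<Rightarrow> nat \<Rightarrow> real)
    \<Rightarrow> ('r \<Rightarrow> nat) \<Rightarrow> ('r \<Rightarrow> 'l \<Rightarrow> nat) \<Rightarrow> 'l \<Rightarrow> real" where
  "scoreM R rs sc w kk idx x =
     (\<Sum>ro\<in>{ro\<in>R. x \<in> rs ro}. w (idx ro x) (kk ro) * sc ro)"

definition seg_lb :: "'r set \<Rightarrow> ('r \<Rightarrow> 'l set) \<Rightarrow> ('r \<Rightarrow> real) \<Rightarrow> (nat \<Rightarrow> nat \<Rightarrow> real)
    \<Rightarrow> ('r \<Rightarrow> nat) \<Rightarrow> ('r \<Rightarrow> 'l \<Rightarrow> nat) \<Rightarrow> 'l set \<Rightarrow> real" where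
  "seg_lb R rs sc w kk idx S =
     (\<Sum>ro\<in>{ro\<in>R. S \<subseteq> rs ro}. (INF x\<in>S. w (idx ro x) (kk ro) * sc ro))"

definition seg_ub :: "'r set \<Rightarrow> ('r \<Rightarrow> 'l set) \<Rightarrow> ('r \<Rightarrow> real) \<Rightarrow> (nat \<Rightarrow> nat \<Rightarrow> real)
    \<Rightarrow> ('r \<Rightarrow> nat) \<Rightarrow> ('r \<Rightarrow> 'l \<Rightarrow> nat) \<Rightarrow> 'l set \<Rightarrow> real" where
  "seg_ub R rs sc w kk idx S =
     (\<Sum>ro\<in>{ro\<in>R. S \<inter> rs ro \<noteq> {}}. (SUP x\<in>S \<inter> rs ro. w (idx ro x) (kk ro) * sc ro))"

definition max_const_score ::
    "'e set \<Rightarrow> ('e \<Rightarrow> 'v) \<Rightarrow> ('e \<Rightarrow> 'v) \<Rightarrow> (('v, 'e) nloc \<Rightarrow> real) \<Rightarrow> 'e segment \<Rightarrow> bool" where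
  "max_const_score E src tgt score s =
     ((\<forall>x\<in>segset src tgt s. \<forall>y\<in>segset src tgt s. score x = score y) \<and>
      (\<forall>x\<in>segset src tgt s. \<forall>p\<in>netpoints E. score (canon src tgt p) \<le> score x))"

definition optimal_segment ::
    "'e set \<Rightarrow> ('e \<Rightarrow> 'v) \<Rightarrow> ('e \<Rightarrow> 'v) \<Rightarrow> (('v, 'e) nloc \<Rightarrow> real) \<Rightarrow> 'e segment \<Rightarrow> bool" where
  "optimal_segment E src tgt score s =
     (is_segment E src tgt s \<and> max_const_score E src tgt score s \<and>
      \<not> (\<exists>s'. is_segment E src tgt s' \<and> segset src tgt s \<subset> segset src tgt s' \<and>
              max_const_score E src tgt score s'))"

definition optimal_subsegment ::
    "'e set \<Rightarrow> ('e \<Rightarrow> 'v) \<Rightarrow> ('e \<Rightarrow> 'v) \<Rightarrow> (('v, 'e) nloc \<Rightarrow> real) \<Rightarrow> 'e segment \<Rightarrow> bool" where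
  "optimal_subsegment E src tgt score t =
     (is_segment E src tgt t \<and>
      (\<exists>s. optimal_segment E src tgt score s \<and> segset src tgt t \<subseteq> segset src tgt s))"

end

theory Submission
  imports Defs
begin

text \<open>Non-negative weights make the lower bound of \<open>s\<^sub>1\<close> a lower bound for the score of
  each of its points (routes only covering \<open>s\<^sub>1\<close> are dropped, and each remaining term is an
  infimum over \<open>s\<^sub>1\<close>), while the upper bound of \<open>s\<^sub>2\<close> bounds the score of each of its points
  from above.  Since \<open>s\<^sub>1\<close> contains a network point, every point of \<open>s\<^sub>2\<close> scores strictly less
  than some network point, whereas optimal subsegments consist of maximal points.\<close>

lemma segment_contains_netpoint:
  assumes "is_segment E src tgt s"
  shows "\<exists>p\<in>netpoints E. canon src tgt p \<in> segset src tgt s"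
proof -
  obtain ds es de where s: "s = (ds, es, de)" by (cases s)
  from assms have h: "es \<noteq> []" "set es \<subseteq> E" "0 \<le> ds" "ds \<le> 1" "length es = 1 \<longrightarrow> ds \<le> de"
    unfolding is_segment_def s by auto
  then have "(hd es, ds) \<in> netpoints E"
    unfolding netpoints_def by auto
  moreover have "canon src tgt (hd es, ds) \<in> segset src tgt s"
    unfolding segset_def s using h by (auto intro!: imageI)
  ultimately show ?thesis by blast
qed

lemma optimal_subsegment_contains_maximum:
  assumes "optimal_subsegment E src tgt score t"
  shows "\<exists>x\<in>segset src tgt t. \<forall>p\<in>netpoints E. score (canon src tgt p) \<le> score x"
proof -
  from assms obtain s where t: "is_segment E src tgt t"
    and s: "optimal_segment E src tgt score s" and ts: "segset src tgt t \<subseteq> segset src tgt s"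
    unfolding optimal_subsegment_def by blast
  obtain q where "canon src tgt q \<in> segset src tgt t"
    using segment_contains_netpoint[OF t] by blast
  with s ts show ?thesis
    unfolding optimal_segment_def max_const_score_def by blast
qed

lemma seg_lb_le_scoreM:
  assumes "finite R" and "\<forall>ro\<in>R. sc ro \<ge> 0" and "\<forall>j k. w j k \<ge> 0" and "y \<in> S"
  shows "seg_lb R rs sc w kk idx S \<le> scoreM R rs sc w kk idx y"
proof -
  have "seg_lb R rs sc w kk idx S \<le> (\<Sum>ro\<in>{ro\<in>R. S \<subseteq> rs ro}. w (idx ro y) (kk ro) * sc ro)"
    unfolding seg_lb_def
  proof (rule sum_mono)
    fix ro assume "ro \<in> {ro\<in>R. S \<subseteq> rs ro}"
    with assms(2,3) have "bdd_below ((\<lambda>x. w (idx ro x) (kk ro) * sc ro) ` S)"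
      by (intro bdd_belowI2[of _ 0]) auto
    then show "(INF x\<in>S. w (idx ro x) (kk ro) * sc ro) \<le> w (idx ro y) (kk ro) * sc ro"
      using \<open>y \<in> S\<close> by (rule cINF_lower)
  qed
  also have "\<dots> \<le> scoreM R rs sc w kk idx y"
    unfolding scoreM_def by (rule sum_mono2) (use assms in auto)
  finally show ?thesis .
qed

lemma route_weight_le_SUP:
  fixes w :: "nat \<Rightarrow> nat \<Rightarrow> real"
  assumes "\<forall>x\<in>rs ro. 1 \<le> idx ro x \<and> idx ro x \<le> kk ro" and "y \<in> S \<inter> rs ro"
  shows "w (idx ro y) (kk ro) * sc ro \<le> (SUP x\<in>S \<inter> rs ro. w (idx ro x) (kk ro) * sc ro)"
proof -
  have "(\<lambda>x. w (idx ro x) (kk ro) * sc ro) ` (S \<inter> rs ro) \<subseteq> (\<lambda>j. w j (kk ro) * sc ro) ` {1..kk ro}"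
    using assms(1) by auto
  then have "bdd_above ((\<lambda>x. w (idx ro x) (kk ro) * sc ro) ` (S \<inter> rs ro))"
    by (meson bdd_above_mono finite_atLeastAtMost finite_imageI bdd_above_finite)
  with assms(2) show ?thesis by (rule cSUP_upper)
qed

lemma scoreM_le_seg_ub:
  assumes "finite R" and sc: "\<forall>ro\<in>R. sc ro \<ge> 0" and w: "\<forall>j k. w j k \<ge> 0"
    and idx: "\<forall>ro\<in>R. \<forall>x\<in>rs ro. 1 \<le> idx ro x \<and> idx ro x \<le> kk ro"
    and "x \<in> S"
  shows "scoreM R rs sc w kk idx x \<le> seg_ub R rs sc w kk idx S"
proof -
  have "scoreM R rs sc w kk idx x
      \<le> (\<Sum>ro\<in>{ro\<in>R. x \<in> rs ro}. (SUP y\<in>S \<inter> rs ro. w (idx ro y) (kk ro) * sc ro))"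
    unfolding scoreM_def using idx \<open>x \<in> S\<close> by (intro sum_mono route_weight_le_SUP) auto
  also have "\<dots> \<le> seg_ub R rs sc w kk idx S"
    unfolding seg_ub_def
  proof (rule sum_mono2)
    show "finite {ro \<in> R. S \<inter> rs ro \<noteq> {}}" using \<open>finite R\<close> by auto
    show "{ro \<in> R. x \<in> rs ro} \<subseteq> {ro \<in> R. S \<inter> rs ro \<noteq> {}}" using \<open>x \<in> S\<close> by auto
    fix ro assume ro: "ro \<in> {ro \<in> R. S \<inter> rs ro \<noteq> {}} - {ro \<in> R. x \<in> rs ro}"
    then obtain z where z: "z \<in> S \<inter> rs ro" by auto
    have "0 \<le> w (idx ro z) (kk ro) * sc ro" using w sc ro by auto
    also have "\<dots> \<le> (SUP y\<in>S \<inter> rs ro. w (idx ro y) (kk ro) * sc ro)"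
      using idx ro z by (intro route_weight_le_SUP) auto
    finally show "0 \<le> (SUP y\<in>S \<inter> rs ro. w (idx ro y) (kk ro) * sc ro)" .
  qed
  finally show ?thesis .
qed

theorem lemma3:
  fixes E :: "'e set" and src tgt :: "'e \<Rightarrow> 'v"
    and R :: "'r set" and route :: "'r \<Rightarrow> 'e segment" and sc :: "'r \<Rightarrow> real"
    and w :: "nat \<Rightarrow> nat \<Rightarrow> real" and kk :: "'r \<Rightarrow> nat"
    and idx :: "'r \<Rightarrow> ('v, 'e) nloc \<Rightarrow> nat"
    and s1 s2 :: "'e segment"
  defines "rs \<equiv> (\<lambda>ro. segset src tgt (route ro))"
  assumes finR: "finite R"
    and routes: "\<forall>ro\<in>R. is_segment E src tgt (route ro)"
    and score_nonneg: "\<forall>ro\<in>R. sc ro \<ge> 0"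
    and idx_range: "\<forall>ro\<in>R. \<forall>x\<in>rs ro. 1 \<le> idx ro x \<and> idx ro x \<le> kk ro"
    and w_nonneg: "\<forall>j k. w j k \<ge> 0"
    and s1: "is_segment E src tgt s1" and s2: "is_segment E src tgt s2"
    and bound: "seg_lb R rs sc w kk idx (segset src tgt s1)
                  > seg_ub R rs sc w kk idx (segset src tgt s2)"
  shows "\<not> (\<exists>t. optimal_subsegment E src tgt (scoreM R rs sc w kk idx) t
               \<and> segset src tgt t \<subseteq> segset src tgt s2)
       \<and> \<not> (\<exists>x\<in>segset src tgt s2. \<forall>p\<in>netpoints E.
               scoreM R rs sc w kk idx (canon src tgt p) \<le> scoreM R rs sc w kk idx x)"
proof -
  let ?score = "scoreM R rs sc w kk idx"
  obtain p where p: "p \<in> netpoints E" "canon src tgt p \<in> segset src tgt s1"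
    using segment_contains_netpoint[OF s1] by blast
  have no_maximum: "\<not> (\<exists>x\<in>segset src tgt s2. \<forall>p\<in>netpoints E. ?score (canon src tgt p) \<le> ?score x)"
  proof
    assume "\<exists>x\<in>segset src tgt s2. \<forall>p\<in>netpoints E. ?score (canon src tgt p) \<le> ?score x"
    then obtain x where "x \<in> segset src tgt s2" "?score (canon src tgt p) \<le> ?score x"
      using p(1) by blast
    moreover have "seg_lb R rs sc w kk idx (segset src tgt s1) \<le> ?score (canon src tgt p)"
      using finR score_nonneg w_nonneg p(2) by (rule seg_lb_le_scoreM)
    moreover have "?score x \<le> seg_ub R rs sc w kk idx (segset src tgt s2)"
      using finR score_nonneg w_nonneg idx_range \<open>x \<in> segset src tgt s2\<close> by (rule scoreM_le_seg_ub)
    ultimately show False using bound by linarith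
  qed
  moreover have "\<not> (\<exists>t. optimal_subsegment E src tgt ?score t \<and> segset src tgt t \<subseteq> segset src tgt s2)"
    using optimal_subsegment_contains_maximum no_maximum by blast
  ultimately show ?thesis by blast
qed

end
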